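(* Let $G=(V,E)$ be a graph, $v\in V$, $d\ge 1$ an embedding dimension, $\alpha\in(0,1)$ the PageRank decay factor and $\epsilon>0$ the PPR precision. The algorithm $\textsc{InstantEmbedding}(v,G,d,\epsilon)$ (described in the context) has running time $O\!\left(d + \frac{1}{\alpha(1-\alpha)\epsilon}\right)$; in particular it is independent of the number of nodes $n$ and edges $m$ of $G$.
   Context: $G=(V,E)$ is an unweighted graph with $n=|V|$ nodes, $m=|E|$ edges, adjacency matrix $\mathbf{A}$ and diagonal degree matrix $\mathbf{D}$; $\deg(u)$ denotes the degree of $u$; the graph is accessed via adjacency-list queries and hash functions are evaluated in constant time. For a starting distribution $\mathbf{s}$ and decay factor $\alpha\in(0,1)$, the Personalized PageRank vector $\pi(\mathbf{s})$ is defined by $\pi(\mathbf{s}) = \alpha\mathbf{s} + (1-\alpha)\pi(\mathbf{s})^\top\mathbf{D}^{-1}\mathbf{A}$; $\pi_v=\pi(\mathbf{e}_v)$. $\mathrm{SparsePPR}(v,G,\epsilon)$ is the local push approximation of Andersen, Chung and Lang (2007): start with $p=\mathbf{0}$, residual $r=\mathbf{e}_v$; while there is a node $u$ with $r_u \ge \epsilon\deg(u)$, perform a push at $u$: $p_u \mathrel{+}= \alpha r_u$, distribute the remaining residual mass $(1-\alpha)r_u$ of $u$ (in the lazy variant, half kept at $u$ and half spread equally over the neighbors of $u$), and update $r$ accordingly; finally return the sparse vector $p$ listing its nonzero entries. Let $h_d:\mathbb{N}\to\{0,\dots,d-1\}$ and $h_{\mathrm{sgn}}:\mathbb{N}\to\{-1,1\}$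 be hash functions drawn from universal hash families. $\textsc{InstantEmbedding}(v,G,d,\epsilon)$: compute $\pi_v \leftarrow \mathrm{SparsePPR}(v,G,\epsilon)$; set $\mathbf{w}\leftarrow\mathbf{0}_d$; for each nonzero entry $r_j$ of $\pi_v$ (indexed by node $j$), do $\mathbf{w}_{h_d(j)} \mathrel{+}= h_{\mathrm{sgn}}(j)\cdot\max(\log(r_j n),0)$; return $\mathbf{w}$. *)

theory Defs
  imports Complex_Main
begin

text \<open>The algorithm state of SparsePPR is
  the pair (p, r) of the approximation vector and the residual vector.\<close>

definition deg :: "(nat \<Rightarrow> nat \<Rightarrow> bool) \<Rightarrow> nat set \<Rightarrow> nat \<Rightarrow> nat" where
  "deg E V u = card {w \<in> V. E u w}"

definition graph_ok :: "nat set \<Rightarrow> (nat \<Rightarrow> nat \<Rightarrow> bool) \<Rightarrow> bool" where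
  "graph_ok V E \<longleftrightarrow> finite V \<and> (\<forall>u w. E u w \<longrightarrow> u \<in> V \<and> w \<in> V)
     \<and> (\<forall>u w. E u w \<longrightarrow> E w u) \<and> (\<forall>u. \<not> E u u)"

definition push :: "bool \<Rightarrow> (nat \<Rightarrow> nat \<Rightarrow> bool) \<Rightarrow> nat set \<Rightarrow> real \<Rightarrow> nat
     \<Rightarrow> (nat \<Rightarrow> real) \<times> (nat \<Rightarrow> real) \<Rightarrow> (nat \<Rightarrow> real) \<times> (nat \<Rightarrow> real)" where
  "push lazy E V \<alpha> u s =
    (let p = fst s; r = snd s; ru = r u; k = real (deg E V u) in
     (p(u := p u + \<alpha> * ru),
      (if lazy then
         (\<lambda>w. (if w = u then (1 - \<alpha>) * ru / 2 else r w)
               + (if E u w then (1 - \<alpha>) * ru / (2 * k) else 0))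
       else
         (\<lambda>w. (if w = u then 0 else r w)
               + (if E u w then (1 - \<alpha>) * ru / k else 0)))))"

definition ppr_init :: "nat \<Rightarrow> (nat \<Rightarrow> real) \<times> (nat \<Rightarrow> real)" where
  "ppr_init v = ((\<lambda>_. 0), (\<lambda>w. if w = v then 1 else 0))"

fun valid_pushes :: "bool \<Rightarrow> (nat \<Rightarrow> nat \<Rightarrow> bool) \<Rightarrow> nat set \<Rightarrow> real \<Rightarrow> real
     \<Rightarrow> (nat \<Rightarrow> real) \<times> (nat \<Rightarrow> real) \<Rightarrow> nat list \<Rightarrow> bool" where
  "valid_pushes lazy E V \<alpha> \<epsilon> s [] = True"
| "valid_pushes lazy E V \<alpha> \<epsilon> s (u # us) =
     (u \<in> V \<and> snd s u \<ge> \<epsilon> * real (deg E V u)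
      \<and> valid_pushes lazy E V \<alpha> \<epsilon> (push lazy E V \<alpha> u s) us)"

fun run_pushes :: "bool \<Rightarrow> (nat \<Rightarrow> nat \<Rightarrow> bool) \<Rightarrow> nat set \<Rightarrow> real
     \<Rightarrow> (nat \<Rightarrow> real) \<times> (nat \<Rightarrow> real) \<Rightarrow> nat list \<Rightarrow> (nat \<Rightarrow> real) \<times> (nat \<Rightarrow> real)" where
  "run_pushes lazy E V \<alpha> s [] = s"
| "run_pushes lazy E V \<alpha> s (u # us) = run_pushes lazy E V \<alpha> (push lazy E V \<alpha> u s) us"

text \<open>Running time of InstantEmbedding when SparsePPR performs the pushes us:
  d for initialising w; deg(u) + 1 for each push at u (constant work plus one
  update per neighbour); and one unit per nonzero entry of the returned sparse
  vector p (constant-time hash evaluations and update of w).\<close>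
definition ie_cost :: "bool \<Rightarrow> (nat \<Rightarrow> nat \<Rightarrow> bool) \<Rightarrow> nat set \<Rightarrow> real \<Rightarrow> nat
     \<Rightarrow> nat \<Rightarrow> nat list \<Rightarrow> real" where
  "ie_cost lazy E V \<alpha> v d us =
     real d + (\<Sum>u\<leftarrow>us. real (deg E V u) + 1)
     + real (card {j \<in> V. fst (run_pushes lazy E V \<alpha> (ppr_init v) us) j \<noteq> 0})"

end

theory Submission
  imports Defs
begin

text \<open>Each push at u keeps the residual nonnegative and removes exactly \<open>\<alpha> r\<^sub>u \<ge> \<alpha> \<epsilon> deg(u)\<close>
  from the total residual mass, which starts at 1. Hence the pushed nodes have total degree
  at most \<open>1/(\<alpha> \<epsilon>)\<close>. This bounds the push work, and also the number of pushes and so the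
  support of p, since every push has degree at least 1 and p is nonzero only at pushed nodes.
  The resulting bound \<open>d + 3/(\<alpha> \<epsilon>)\<close> is even slightly stronger than the claimed one.\<close>

lemma sum_spread_to_neighbours:
  fixes r :: "nat \<Rightarrow> real"
  assumes fin: "finite V" and u: "u \<in> V" and deg: "deg E V u \<ge> 1"
  shows "(\<Sum>w\<in>V. (if w = u then a else r w) + (if E u w then c / real (deg E V u) else 0))
    = sum r V - r u + a + c"
proof -
  have kept: "(\<Sum>w\<in>V. if w = u then a else r w) = a + (sum r V - r u)"
    using fin u by (simp add: sum.delta_remove sum_diff1)
  have "(\<Sum>w\<in>V. if E u w then c / real (deg E V u) else 0)
      = (\<Sum>w\<in>{w \<in> V. E u w}. c / real (deg E V u))"
    by (simp only: sum.inter_filter[OF fin])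
  also have "\<dots> = real (deg E V u) * (c / real (deg E V u))"
    by (simp add: deg_def)
  also have "\<dots> = c"
    using deg by simp
  finally have spread: "(\<Sum>w\<in>V. if E u w then c / real (deg E V u) else 0) = c" .
  show ?thesis
    by (simp add: sum.distrib kept spread)
qed

lemma push_residual_mass:
  assumes fin: "finite V" and u: "u \<in> V" and deg: "deg E V u \<ge> 1"
  shows "sum (snd (push lazy E V \<alpha> u s)) V = sum (snd s) V - \<alpha> * snd s u"
proof (cases lazy)
  case True
  have residual: "snd (push lazy E V \<alpha> u s)
    = (\<lambda>w. (if w = u then (1 - \<alpha>) * snd s u / 2 else snd s w)
      + (if E u w then ((1 - \<alpha>) * snd s u / 2) / real (deg E V u) else 0))"
    using True by (simp add: push_def Let_def) (simp only: divide_divide_eq_left)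
  show ?thesis
    unfolding residual sum_spread_to_neighbours[OF fin u deg] by (simp add: algebra_simps)
next
  case False
  have residual: "snd (push lazy E V \<alpha> u s) = (\<lambda>w. (if w = u then 0 else snd s w)
      + (if E u w then ((1 - \<alpha>) * snd s u) / real (deg E V u) else 0))"
    using False by (simp add: push_def Let_def)
  show ?thesis
    unfolding residual sum_spread_to_neighbours[OF fin u deg] by (simp add: algebra_simps)
qed

lemma push_residual_nonneg:
  assumes "\<alpha> \<le> 1" and "\<forall>w. snd s w \<ge> 0"
  shows "snd (push lazy E V \<alpha> u s) w \<ge> 0"
  using assms by (auto simp: push_def Let_def)

lemma valid_pushes_degree_sum_le:
  assumes fin: "finite V" and deg: "\<forall>u\<in>V. deg E V u \<ge> 1" and \<alpha>: "0 \<le> \<alpha>" "\<alpha> \<le> 1"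
  shows "\<forall>w. snd s w \<ge> 0 \<Longrightarrow> valid_pushes lazy E V \<alpha> \<epsilon> s us \<Longrightarrow>
    \<alpha> * \<epsilon> * (\<Sum>u\<leftarrow>us. real (deg E V u)) \<le> sum (snd s) V"
proof (induction us arbitrary: s)
  case Nil
  then show ?case by (simp add: sum_nonneg)
next
  case (Cons u us)
  then have u: "u \<in> V" and threshold: "\<epsilon> * real (deg E V u) \<le> snd s u"
    and rest: "valid_pushes lazy E V \<alpha> \<epsilon> (push lazy E V \<alpha> u s) us"
    by auto
  have "\<alpha> * \<epsilon> * (\<Sum>u\<leftarrow>us. real (deg E V u)) \<le> sum (snd (push lazy E V \<alpha> u s)) V"
    using Cons.IH[OF _ rest] push_residual_nonneg[OF \<alpha>(2) Cons.prems(1)] by blast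
  also have "\<dots> = sum (snd s) V - \<alpha> * snd s u"
    using push_residual_mass[OF fin u] deg u by blast
  finally show ?case
    using mult_left_mono[OF threshold \<alpha>(1)] by (simp add: algebra_simps)
qed

lemma valid_pushes_subset:
  "valid_pushes lazy E V \<alpha> \<epsilon> s us \<Longrightarrow> set us \<subseteq> V"
  by (induction us arbitrary: s) (simp_all, blast)

lemma run_pushes_approx_nonzero:
  "fst (run_pushes lazy E V \<alpha> s us) j \<noteq> 0 \<Longrightarrow> fst s j \<noteq> 0 \<or> j \<in> set us"
proof (induction us arbitrary: s)
  case Nil
  then show ?case by simp
next
  case (Cons u us)
  then have "fst (push lazy E V \<alpha> u s) j \<noteq> 0 \<or> j \<in> set us" by simp
  then show ?case by (auto simp: push_def Let_def split: if_splits)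
qed

lemma length_le_degree_sum:
  assumes "\<forall>u\<in>set us. deg E V u \<ge> 1"
  shows "real (length us) \<le> (\<Sum>u\<leftarrow>us. real (deg E V u))"
  using assms by (induction us) (auto simp: add_mono)

lemma ie_cost_le_degree_sum:
  assumes deg: "\<forall>u\<in>V. deg E V u \<ge> 1" and pushed: "set us \<subseteq> V"
  shows "ie_cost lazy E V \<alpha> v d us \<le> real d + 3 * (\<Sum>u\<leftarrow>us. real (deg E V u))"
proof -
  let ?S = "\<Sum>u\<leftarrow>us. real (deg E V u)"
  have length: "real (length us) \<le> ?S"
    using length_le_degree_sum deg pushed by blast
  have "{j \<in> V. fst (run_pushes lazy E V \<alpha> (ppr_init v) us) j \<noteq> 0} \<subseteq> set us"
    using run_pushes_approx_nonzero[of lazy E V \<alpha> "ppr_init v" us] by (auto simp: ppr_init_def)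
  then have "card {j \<in> V. fst (run_pushes lazy E V \<alpha> (ppr_init v) us) j \<noteq> 0} \<le> length us"
    by (meson card_length card_mono List.finite_set order_trans)
  then show ?thesis
    using length unfolding ie_cost_def sum_list_addf sum_list_triv by linarith
qed

theorem theorem1:
  shows "\<exists>C>0. \<forall>(V::nat set) E v (d::nat) (\<alpha>::real) (\<epsilon>::real) lazy us.
    graph_ok V E \<and> (\<forall>u\<in>V. deg E V u \<ge> 1) \<and> v \<in> V \<and> d \<ge> 1
    \<and> 0 < \<alpha> \<and> \<alpha> < 1 \<and> \<epsilon> > 0
    \<and> valid_pushes lazy E V \<alpha> \<epsilon> (ppr_init v) us
    \<longrightarrow> ie_cost lazy E V \<alpha> v d us \<le> C * (real d + 1 / (\<alpha> * (1 - \<alpha>) * \<epsilon>))"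
proof (intro exI[of _ 3] conjI allI impI)
  fix V E v and d :: nat and \<alpha> \<epsilon> :: real and lazy us
  assume "graph_ok V E \<and> (\<forall>u\<in>V. deg E V u \<ge> 1) \<and> v \<in> V \<and> d \<ge> 1
    \<and> 0 < \<alpha> \<and> \<alpha> < 1 \<and> \<epsilon> > 0 \<and> valid_pushes lazy E V \<alpha> \<epsilon> (ppr_init v) us"
  then have fin: "finite V" and deg: "\<forall>u\<in>V. deg E V u \<ge> 1" and v: "v \<in> V"
    and \<alpha>: "0 < \<alpha>" "\<alpha> < 1" and \<epsilon>: "\<epsilon> > 0"
    and valid: "valid_pushes lazy E V \<alpha> \<epsilon> (ppr_init v) us"
    by (auto simp: graph_ok_def)
  let ?S = "\<Sum>u\<leftarrow>us. real (deg E V u)"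
  have "\<alpha> * \<epsilon> * ?S \<le> sum (snd (ppr_init v)) V"
    using \<alpha> by (intro valid_pushes_degree_sum_le[OF fin deg _ _ _ valid]) (auto simp: ppr_init_def)
  also have "\<dots> = 1"
    using fin v by (simp add: ppr_init_def)
  finally have "?S \<le> 1 / (\<alpha> * \<epsilon>)"
    using \<alpha> \<epsilon> by (simp add: field_simps)
  also have "\<dots> \<le> 1 / (\<alpha> * (1 - \<alpha>) * \<epsilon>)"
    using \<alpha> \<epsilon> by (intro divide_left_mono) (auto simp: mult_le_cancel_left1 algebra_simps)
  finally have S: "?S \<le> 1 / (\<alpha> * (1 - \<alpha>) * \<epsilon>)" .
  have "ie_cost lazy E V \<alpha> v d us \<le> real d + 3 * ?S"
    by (rule ie_cost_le_degree_sum[OF deg valid_pushes_subset[OF valid]])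
  also have "\<dots> \<le> 3 * (real d + 1 / (\<alpha> * (1 - \<alpha>) * \<epsilon>))"
    using S by simp
  finally show "ie_cost lazy E V \<alpha> v d us \<le> 3 * (real d + 1 / (\<alpha> * (1 - \<alpha>) * \<epsilon>))" .
qed simp

end
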